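(* Assume Assumptions 1, 2, 3 (stated in the context). If Line-Search (Algorithm 3, described in the context), called with input point $\theta$, makes infinitely many calls to subdivision, then $\theta$ is unsafe; in other words, $\theta$ cannot pass the safety check (Algorithm 2) under any finite spatial-temporal subdivision.
   Context: Problem: for $\theta$ and $t\in[0,T]$, body $i$ occupies $b_i(t,\theta)\subset\mathbb{R}^3$, obstacles occupy $o$; $\text{dist}$ is the shortest Euclidean distance between sets; $d_0\ge0$; $\mathcal{O}(\theta)$ twice differentiable cost. Assumption 1: finite decompositions $b_i=\bigcup_j b_{ij}$, $o=\bigcup_k o_k$ with each $(t,\theta)\mapsto\text{dist}(b_{ij}(t,\theta),o_k)$ sufficiently smooth. Assumption 2: the feasible domain of $t,\theta$ is bounded. Assumption 3: $\mathcal{P}$ sufficiently smooth, monotonically decreasing on $(0,\infty)$, $\lim_{x\to0}\mathcal{P}=\infty$, $\lim_{x\to\infty}\mathcal{P}=0$, $\lim_{x\to0}x\mathcal{P}(x)=\infty$. $L_1$: a constant with $|\text{dist}(b_{ij}(t_1,\theta),o_k)-\text{dist}(b_{ij}(t_2,\theta),o_k)|\le L_1|t_1-t_2|$ for all arguments. $\mathcal{P}_{ijk}(t,\theta)=\mathcal{P}(\text{dist}(b_{ij}(t,\theta),o_k)-d_0)$; per triple $(i,j,k)$ a finite partition of $[0,T]$ into intervals $[T_0^l,T_1^l]$; subdividing $(i,j,k,l)$ replaces the interval by its two halves; $\mathcal{P}_{ijkl}(\theta)=\mathcal{P}_{ijk}((T_0^l+T_1^l)/2,\theta)$; $\mathcal{E}=\mathcal{O}+\mu\sum_{ijkl}(T_1^l-T_0^l)\mathcal{P}_{ijkl}$,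 $\mu>0$. Directions $d^{(1)}=-\nabla_\theta\mathcal{E}$ or $d^{(2)}=\mathcal{M}(\nabla^2_\theta\mathcal{E})^{-1}d^{(1)}$ with $\underline\beta I\preceq\mathcal{M}(H)\preceq\bar\beta I$. Wolfe: $\mathcal{E}(\theta+d\alpha)\le\mathcal{E}(\theta)+c\langle d\alpha,\nabla\mathcal{E}\rangle$, $c\in(0,1)$. Safety check (Algorithm 2) at $\theta$: $\psi(x)=L_1x/2+L_2x^\eta$ ($L_2,\eta>0$); return a tuple $(i,j,k,l)$ with $\text{dist}(b_{ij}((T_0^l+T_1^l)/2,\theta),o_k)\le d_0+\psi(T_1^l-T_0^l)$ if one exists, else None (then $\theta$ passes / is safe; otherwise unsafe). Line-Search$(\theta,d,\epsilon_\alpha)$ (Algorithm 3; $\alpha_0>0,\gamma\in(0,1)$): $\alpha=\alpha_0$; while $\theta+d\alpha$ fails the safety check or Wolfe: if the check returned $(i,j,k,l)$, then if $\alpha\le\epsilon_\alpha$: $\epsilon_\alpha\leftarrow\gamma\epsilon_\alpha$, subdivide $(i,j,k,l)$, re-evaluate $\mathcal{E}$, recompute $d$; else $\alpha\leftarrow\gamma\alpha$; if only Wolfe fails, $\alpha\leftarrow\gamma\alpha$. Return $\alpha,\epsilon_\alpha$. *)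

theory Defs
  imports "HOL-Analysis.Analysis"
begin

definition C2_on :: "'b::euclidean_space set \<Rightarrow> ('b \<Rightarrow> real) \<Rightarrow> bool" where
  "C2_on S f \<longleftrightarrow> open S \<and>
     (\<exists>f' f''. (\<forall>x\<in>S. (f has_derivative blinfun_apply (f' x)) (at x)) \<and>
               (\<forall>x\<in>S. (f' has_derivative blinfun_apply (f'' x)) (at x)) \<and>
               continuous_on S f'')"

definition grad :: "(real^'n \<Rightarrow> real) \<Rightarrow> real^'n \<Rightarrow> real^'n" where
  "grad f x = (SOME g. (f has_derivative (\<lambda>h. g \<bullet> h)) (at x))"

definition hess :: "(real^'n \<Rightarrow> real) \<Rightarrow> real^'n \<Rightarrow> real^'n^'n" where
  "hess f x = (SOME H. (grad f has_derivative (\<lambda>h. H *v h)) (at x))"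

(* finite partition of [0,T] into closed intervals, represented by its finite set of breakpoints *)
definition is_partition :: "real \<Rightarrow> real set \<Rightarrow> bool" where
  "is_partition T A \<longleftrightarrow> finite A \<and> 0 \<in> A \<and> T \<in> A \<and> A \<subseteq> {0..T}"

definition intervals :: "real set \<Rightarrow> (real \<times> real) set" where
  "intervals A = {(a,b). a \<in> A \<and> b \<in> A \<and> a < b \<and> (\<forall>s\<in>A. \<not> (a < s \<and> s < b))}"

definition subdivide :: "('p \<Rightarrow> real set) \<Rightarrow> 'p \<Rightarrow> real \<Rightarrow> real \<Rightarrow> ('p \<Rightarrow> real set)" where
  "subdivide S p a b = S(p := insert ((a + b) / 2) (S p))"

(* dist(b_ij(t,theta), o_k); a triple (i,j,k) is a pair (q,k) where q indexes the body piece b_ij *)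
definition Dist :: "('q \<Rightarrow> real \<Rightarrow> 'th \<Rightarrow> (real^3) set) \<Rightarrow> ('k \<Rightarrow> (real^3) set)
     \<Rightarrow> 'q \<times> 'k \<Rightarrow> real \<Rightarrow> 'th \<Rightarrow> real" where
  "Dist bp ob p t th = setdist (bp (fst p) t th) (ob (snd p))"

definition psi :: "real \<Rightarrow> real \<Rightarrow> real \<Rightarrow> real \<Rightarrow> real" where
  "psi L1 L2 \<eta> x = L1 * x / 2 + L2 * x powr \<eta>"

(* the tuple (p,[a,b]) is returned by the safety check (Algorithm 2) at th under subdivision S *)
definition viol :: "('q \<Rightarrow> real \<Rightarrow> 'th \<Rightarrow> (real^3) set) \<Rightarrow> ('k \<Rightarrow> (real^3) set)
     \<Rightarrow> real \<Rightarrow> real \<Rightarrow> real \<Rightarrow> real \<Rightarrow> ('q \<times> 'k \<Rightarrow> real set) \<Rightarrow> 'th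
     \<Rightarrow> 'q \<times> 'k \<Rightarrow> real \<Rightarrow> real \<Rightarrow> bool" where
  "viol bp ob d0 L1 L2 \<eta> S th p a b \<longleftrightarrow>
     (a, b) \<in> intervals (S p) \<and> Dist bp ob p ((a + b) / 2) th \<le> d0 + psi L1 L2 \<eta> (b - a)"

definition check_fails :: "('q \<Rightarrow> real \<Rightarrow> 'th \<Rightarrow> (real^3) set) \<Rightarrow> ('k \<Rightarrow> (real^3) set)
     \<Rightarrow> real \<Rightarrow> real \<Rightarrow> real \<Rightarrow> real \<Rightarrow> ('q \<times> 'k \<Rightarrow> real set) \<Rightarrow> 'th \<Rightarrow> bool" where
  "check_fails bp ob d0 L1 L2 \<eta> S th \<longleftrightarrow> (\<exists>p a b. viol bp ob d0 L1 L2 \<eta> S th p a b)"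

definition energy :: "(real^'n \<Rightarrow> real) \<Rightarrow> (real \<Rightarrow> real) \<Rightarrow> real \<Rightarrow> real
     \<Rightarrow> ('q::finite \<Rightarrow> real \<Rightarrow> real^'n \<Rightarrow> (real^3) set) \<Rightarrow> ('k::finite \<Rightarrow> (real^3) set)
     \<Rightarrow> ('q \<times> 'k \<Rightarrow> real set) \<Rightarrow> real^'n \<Rightarrow> real" where
  "energy Obj P \<mu> d0 bp ob S th =
     Obj th + \<mu> * (\<Sum>p\<in>UNIV. \<Sum>ab\<in>intervals (S p).
        (snd ab - fst ab) * P (Dist bp ob p ((fst ab + snd ab) / 2) th - d0))"

definition direction :: "bool \<Rightarrow> (real^'n^'n \<Rightarrow> real^'n^'n) \<Rightarrow> (real^'n \<Rightarrow> real) \<Rightarrow> real^'n \<Rightarrow> real^'n" where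
  "direction newton M E th =
     (if newton then matrix_inv (M (hess E th)) *v (- grad E th) else - grad E th)"

(* Line-Search state: (alpha, eps_alpha, subdivision, direction).
   V S x p a b : check at x under S may return (p,[a,b]);
   Ef S : energy under S;  dirf S : recomputed direction under S (at th). *)
type_synonym ('p, 'n) ls_state = "real \<times> real \<times> ('p \<Rightarrow> real set) \<times> (real^'n)"

definition ls_subdiv_step :: "(('p \<Rightarrow> real set) \<Rightarrow> real^'n \<Rightarrow> 'p \<Rightarrow> real \<Rightarrow> real \<Rightarrow> bool)
     \<Rightarrow> (('p \<Rightarrow> real set) \<Rightarrow> real^'n) \<Rightarrow> real \<Rightarrow> real^'n
     \<Rightarrow> ('p, 'n) ls_state \<Rightarrow> ('p, 'n) ls_state \<Rightarrow> bool" where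
  "ls_subdiv_step V dirf \<gamma> th st st' \<longleftrightarrow>
     (case st of (\<alpha>, \<epsilon>, S, d) \<Rightarrow>
        \<alpha> \<le> \<epsilon> \<and>
        (\<exists>p a b. V S (th + \<alpha> *\<^sub>R d) p a b \<and>
           st' = (\<alpha>, \<gamma> * \<epsilon>, subdivide S p a b, dirf (subdivide S p a b))))"

definition ls_shrink_step :: "(('p \<Rightarrow> real set) \<Rightarrow> real^'n \<Rightarrow> 'p \<Rightarrow> real \<Rightarrow> real \<Rightarrow> bool)
     \<Rightarrow> (('p \<Rightarrow> real set) \<Rightarrow> real^'n \<Rightarrow> real) \<Rightarrow> real \<Rightarrow> real \<Rightarrow> real^'n
     \<Rightarrow> ('p, 'n) ls_state \<Rightarrow> ('p, 'n) ls_state \<Rightarrow> bool" where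
  "ls_shrink_step V Ef \<gamma> c th st st' \<longleftrightarrow>
     (case st of (\<alpha>, \<epsilon>, S, d) \<Rightarrow>
        st' = (\<gamma> * \<alpha>, \<epsilon>, S, d) \<and>
        ((\<epsilon> < \<alpha> \<and> (\<exists>p a b. V S (th + \<alpha> *\<^sub>R d) p a b)) \<or>
         ((\<forall>p a b. \<not> V S (th + \<alpha> *\<^sub>R d) p a b) \<and>
          \<not> (Ef S (th + \<alpha> *\<^sub>R d) \<le> Ef S th + c * ((\<alpha> *\<^sub>R d) \<bullet> grad (Ef S) th)))))"

end

theory Submission
  imports Defs
begin

(* Suppose theta passed the safety check under some partition S.  On every interval the term
   L1 x / 2 of psi absorbs the Lipschitz variation of the distance, and L2 x^eta > 0 makes the
   comparison strict, so every distance at theta exceeds d0; by compactness it exceeds d0 + m on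
   a neighbourhood of theta.  The penalty part of the energy is a Riemann sum of a continuous
   function, so the gradient at theta, and with it the search direction, is bounded uniformly
   over all partitions.  Each subdivision call multiplies eps_alpha by gamma and happens only
   when alpha <= eps_alpha, so along infinitely many calls the trial points converge to theta.
   Finally, only finitely many intervals of length >= delta are ever subdivided, so some flagged
   interval near theta is so short that psi < m there, contradicting the margin. *)

section \<open>Partitions of [0, T]\<close>

lemma intervals_overlap_eq:
  assumes "(a, b) \<in> intervals A" "(a', b') \<in> intervals A" "a < b'" "a' < b"
  shows "a = a' \<and> b = b'"
  using assms unfolding intervals_def by (smt (verit) case_prodD mem_Collect_eq)

lemma midpoint_mem_intervals:
  assumes "(a, b) \<in> intervals A" "A \<subseteq> {0..T}"
  shows "(a + b) / 2 \<in> {0..T}"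
  using assms unfolding intervals_def by auto

lemma finite_intervals: "finite A \<Longrightarrow> finite (intervals A)"
  by (rule finite_subset[of _ "A \<times> A"]) (auto simp: intervals_def)

lemma sum_interval_lengths_le:
  assumes "finite A" "A \<subseteq> {0..T}" "0 \<le> T"
  shows "(\<Sum>(a, b)\<in>intervals A. b - a) \<le> T"
proof -
  let ?I = "\<lambda>(a, b). {a..<b}"
  have disjoint: "disjoint_family_on ?I (intervals A)"
    unfolding disjoint_family_on_def
    by (clarsimp, metis intervals_overlap_eq)
  have "(\<Sum>(a, b)\<in>intervals A. b - a) = (\<Sum>ab\<in>intervals A. measure lborel (?I ab))"
    by (rule sum.cong) (auto simp: intervals_def)
  also have "\<dots> = measure lborel (\<Union>ab\<in>intervals A. ?I ab)"
    using disjoint finite_intervals[OF assms(1)]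
    by (intro measure_finite_Union[symmetric]) (auto simp: intervals_def)
  also have "\<dots> \<le> measure lborel {0..T}"
    using assms(2,3) finite_intervals[OF assms(1)]
    by (intro measure_mono_fmeasurable) (force simp: intervals_def fmeasurable_def)+
  also have "\<dots> = T" using assms by simp
  finally show ?thesis .
qed

lemma partition_intervals_cover:
  assumes "is_partition T A" "0 < T" "t \<in> {0..T}"
  obtains a b where "(a, b) \<in> intervals A" "a \<le> t" "t \<le> b"
proof -
  have A: "finite A" "0 \<in> A" "T \<in> A" using assms(1) by (auto simp: is_partition_def)
  define b where "b = Min {s \<in> A. t \<le> s \<and> 0 < s}"
  define a where "a = Max {s \<in> A. s < b}"
  have "{s \<in> A. t \<le> s \<and> 0 < s} \<noteq> {}"
    using A assms(2,3) by auto
  then have b: "b \<in> A" "t \<le> b" "0 < b"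
    and b_least: "\<And>s. s \<in> A \<Longrightarrow> t \<le> s \<Longrightarrow> 0 < s \<Longrightarrow> b \<le> s"
    using Min_in[of "{s \<in> A. t \<le> s \<and> 0 < s}"] A unfolding b_def by auto
  have "{s \<in> A. s < b} \<noteq> {}"
    using A b(3) by auto
  then have a: "a \<in> A" "a < b" and a_greatest: "\<And>s. s \<in> A \<Longrightarrow> s < b \<Longrightarrow> s \<le> a"
    using Max_in[of "{s \<in> A. s < b}"] A unfolding a_def by auto
  have "a \<le> t"
    using b_least[OF a(1)] a(2) assms(3) by fastforce
  moreover have "(a, b) \<in> intervals A"
    using a b a_greatest unfolding intervals_def by force
  ultimately show ?thesis using that b(2) by blast
qed

lemma is_partition_subdivide:
  assumes "\<forall>q. is_partition T (S q)" "(a, b) \<in> intervals (S p)"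
  shows "is_partition T (subdivide S p a b q)"
proof -
  have "S p \<subseteq> {0..T}" using assms(1) by (simp add: is_partition_def)
  from midpoint_mem_intervals[OF assms(2) this] show ?thesis
    using assms(1) unfolding subdivide_def is_partition_def by auto
qed

section \<open>Gradients and search directions\<close>

lemma grad_inner_eq:
  assumes "(f has_derivative L) (at x)"
  shows "grad f x \<bullet> h = L h"
proof -
  have "linear L"
    using assms has_derivative_linear by blast
  then have "(f has_derivative (\<lambda>h. adjoint L 1 \<bullet> h)) (at x)"
    using assms by (simp add: adjoint_works inner_commute)
  then have "(f has_derivative (\<lambda>h. grad f x \<bullet> h)) (at x)"
    unfolding grad_def by (rule someI)
  then show ?thesis
    using has_derivative_unique[OF assms] by metis
qed

lemma norm_grad_le:
  assumes "(f has_derivative L) (at x)" "0 \<le> C" "\<And>h. \<bar>L h\<bar> \<le> C * norm h"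
  shows "norm (grad f x) \<le> C"
proof -
  have "norm (grad f x) * norm (grad f x) = L (grad f x)"
    using grad_inner_eq[OF assms(1)] by (simp add: power2_norm_eq_inner flip: power2_eq_square)
  also have "\<dots> \<le> C * norm (grad f x)"
    using assms(3) abs_le_D1 by blast
  finally show ?thesis
    using assms(2) by (cases "grad f x = 0") auto
qed

lemma norm_matrix_inv_mult_le:
  fixes A :: "real^'n^'n"
  assumes "0 < \<beta>" and coercive: "\<And>v. \<beta> * (v \<bullet> v) \<le> v \<bullet> (A *v v)"
  shows "norm (matrix_inv A *v w) \<le> norm w / \<beta>"
proof -
  have "x = 0" if "A *v x = 0" for x
    using coercive[of x] that \<open>0 < \<beta>\<close> by (simp add: mult_le_0_iff flip: power2_norm_eq_inner)
  then have "invertible A"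
    using matrix_left_invertible_ker invertible_left_inverse by blast
  then have "A ** matrix_inv A = mat 1"
    unfolding invertible_def matrix_inv_def by (rule someI_ex[THEN conjunct1])
  define u where "u = matrix_inv A *v w"
  have "A *v u = w"
    unfolding u_def by (simp add: matrix_vector_mul_assoc \<open>A ** matrix_inv A = mat 1\<close>)
  then have "\<beta> * (norm u)\<^sup>2 \<le> u \<bullet> w"
    using coercive[of u] by (simp add: power2_norm_eq_inner)
  also have "\<dots> \<le> norm u * norm w"
    by (rule norm_cauchy_schwarz)
  finally have "\<beta> * norm u \<le> norm w"
    by (cases "u = 0") (auto simp: power2_eq_square)
  then show ?thesis
    unfolding u_def using \<open>0 < \<beta>\<close> by (simp add: field_simps)
qed

lemma norm_direction_le:
  assumes "0 < \<beta>" "\<And>H v. \<beta> * (v \<bullet> v) \<le> v \<bullet> (M H *v v)"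
  shows "norm (direction newton M E x) \<le> max 1 (1 / \<beta>) * norm (grad E x)"
proof (cases newton)
  case True
  then have "norm (direction newton M E x) \<le> norm (- grad E x) / \<beta>"
    unfolding direction_def using norm_matrix_inv_mult_le[of \<beta> "M (hess E x)" "- grad E x"] assms by simp
  also have "\<dots> \<le> max 1 (1 / \<beta>) * norm (grad E x)"
    using mult_right_mono[OF max.cobounded2[of "1 / \<beta>" 1] norm_ge_zero[of "grad E x"]] by simp
  finally show ?thesis .
next
  case False
  then show ?thesis
    using mult_right_mono[OF max.cobounded1[of 1 "1 / \<beta>"] norm_ge_zero[of "grad E x"]]
    by (simp add: direction_def)
qed

section \<open>A bound on the energy gradient uniform in the partition\<close>

lemma midpoint_sum_abs_le:
  assumes "finite A" "A \<subseteq> {0..T}" "0 \<le> T" "\<And>t. t \<in> {0..T} \<Longrightarrow> \<bar>f t\<bar> \<le> B"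
  shows "\<bar>\<Sum>(a, b)\<in>intervals A. (b - a) * f ((a + b) / 2)\<bar> \<le> B * T"
proof -
  have "\<bar>\<Sum>(a, b)\<in>intervals A. (b - a) * f ((a + b) / 2)\<bar> \<le> (\<Sum>(a, b)\<in>intervals A. (b - a) * B)"
    using assms(2,4) midpoint_mem_intervals[of _ _ A T]
    by (intro order_trans[OF sum_abs sum_mono]) (auto simp: abs_mult intervals_def intro!: mult_left_mono)
  also have "\<dots> = B * (\<Sum>(a, b)\<in>intervals A. b - a)"
    by (simp add: sum_distrib_left split_def mult.commute)
  also have "\<dots> \<le> B * T"
    using assms(3) assms(4)[of 0] sum_interval_lengths_le[OF assms(1-3)] by (simp add: mult_left_mono)
  finally show ?thesis .
qed

lemma C2_on_imp_continuous_derivative: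
  assumes "C2_on S f"
  obtains f' where "\<And>x. x \<in> S \<Longrightarrow> (f has_derivative blinfun_apply (f' x)) (at x)" "continuous_on S f'"
proof -
  obtain f' f'' where "\<forall>x\<in>S. (f has_derivative blinfun_apply (f' x)) (at x)"
    and "\<forall>x\<in>S. (f' has_derivative blinfun_apply (f'' x)) (at x)"
    using assms unfolding C2_on_def by blast
  moreover have "continuous_on S f'"
    using calculation(2) by (meson continuous_at_imp_continuous_on has_derivative_continuous)
  ultimately show ?thesis
    using that by blast
qed

lemma C2_on_imp_continuous_on:
  assumes "C2_on S f"
  shows "continuous_on S f"
proof -
  obtain f' where "\<And>x. x \<in> S \<Longrightarrow> (f has_derivative blinfun_apply (f' x)) (at x)"
    using C2_on_imp_continuous_derivative[OF assms] by blast
  then show ?thesis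
    by (meson continuous_at_imp_continuous_on has_derivative_continuous)
qed

lemma norm_grad_energy_le:
  fixes bp :: "'q::finite \<Rightarrow> real \<Rightarrow> real^'n \<Rightarrow> (real^3) set"
    and ob :: "'k::finite \<Rightarrow> (real^3) set"
  assumes Dist_deriv: "\<And>p t. ((\<lambda>(t, x). Dist bp ob p t x) has_derivative blinfun_apply (D p t)) (at (t, \<theta>))"
    and P_deriv: "\<And>y. 0 < y \<Longrightarrow> (P has_derivative blinfun_apply (P' y)) (at y)"
    and Obj_deriv: "(Obj has_derivative blinfun_apply O') (at \<theta>)"
    and partition: "\<forall>p. is_partition T (S p)" and "0 \<le> T" "0 \<le> \<mu>"
    and safe: "\<And>p t. t \<in> {0..T} \<Longrightarrow> d0 < Dist bp ob p t \<theta>"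
    and bound: "\<And>p t. t \<in> {0..T} \<Longrightarrow> norm (P' (Dist bp ob p t \<theta> - d0)) * norm (D p t) \<le> B p"
  shows "norm (grad (energy Obj P \<mu> d0 bp ob S) \<theta>) \<le> norm O' + \<mu> * (\<Sum>p\<in>UNIV. B p * T)"
proof (rule norm_grad_le)
  define dP where "dP p t h = blinfun_apply (P' (Dist bp ob p t \<theta> - d0)) (blinfun_apply (D p t) (0, h))"
    for p t h
  have "((\<lambda>x. P (Dist bp ob p t x - d0)) has_derivative dP p t) (at \<theta>)" if "t \<in> {0..T}" for p t
  proof -
    have "((\<lambda>x. Dist bp ob p t x - d0) has_derivative (\<lambda>h. blinfun_apply (D p t) (0, h))) (at \<theta>)"
      using has_derivative_compose[OF has_derivative_Pair[OF has_derivative_const has_derivative_ident]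
          Dist_deriv[of p t]] by (simp add: has_derivative_diff[where g' = "\<lambda>_. 0", simplified])
    from has_derivative_compose[OF this P_deriv] show ?thesis
      unfolding dP_def[abs_def] using safe[OF that, of p] by simp
  qed
  then show "(energy Obj P \<mu> d0 bp ob S has_derivative (\<lambda>h. blinfun_apply O' h +
      \<mu> * (\<Sum>p\<in>UNIV. \<Sum>(a, b)\<in>intervals (S p). (b - a) * dP p ((a + b) / 2) h))) (at \<theta>)"
    unfolding energy_def[abs_def] split_def using partition midpoint_mem_intervals[of _ _ "S _" T]
    by (intro derivative_intros Obj_deriv) (auto simp: is_partition_def)
  have B_nonneg: "0 \<le> B p" for p
    using bound[of 0 p] \<open>0 \<le> T\<close> by (meson atLeastAtMost_iff norm_ge_zero order.trans order_refl
        mult_nonneg_nonneg)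
  then show "0 \<le> norm O' + \<mu> * (\<Sum>p\<in>UNIV. B p * T)"
    using \<open>0 \<le> T\<close> \<open>0 \<le> \<mu>\<close> by (simp add: sum_nonneg)
  fix h
  have "\<bar>dP p t h\<bar> \<le> B p * norm h" if "t \<in> {0..T}" for p t
  proof -
    have "\<bar>dP p t h\<bar> \<le> norm (P' (Dist bp ob p t \<theta> - d0)) * norm (blinfun_apply (D p t) (0, h))"
      unfolding dP_def by (metis norm_blinfun real_norm_def)
    also have "\<dots> \<le> norm (P' (Dist bp ob p t \<theta> - d0)) * (norm (D p t) * norm h)"
      using norm_blinfun[of "D p t" "(0, h)"] by (intro mult_left_mono) (auto simp: norm_Pair)
    also have "\<dots> \<le> B p * norm h"
      using bound[OF that, of p] by (simp add: mult.assoc[symmetric] mult_right_mono)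
    finally show ?thesis .
  qed
  then have piece: "\<bar>\<Sum>(a, b)\<in>intervals (S p). (b - a) * dP p ((a + b) / 2) h\<bar> \<le> B p * norm h * T" for p
    using partition[rule_format, of p] \<open>0 \<le> T\<close> unfolding is_partition_def
    by (intro midpoint_sum_abs_le) auto
  have "\<bar>\<Sum>p\<in>UNIV. \<Sum>(a, b)\<in>intervals (S p). (b - a) * dP p ((a + b) / 2) h\<bar>
      \<le> (\<Sum>p\<in>UNIV. B p * norm h * T)"
    by (rule order_trans[OF sum_abs sum_mono]) (rule piece)
  also have "\<dots> = (\<Sum>p\<in>UNIV. B p * T) * norm h"
    unfolding sum_distrib_right by (simp add: mult_ac)
  finally have "\<bar>\<Sum>p\<in>UNIV. \<Sum>(a, b)\<in>intervals (S p). (b - a) * dP p ((a + b) / 2) h\<bar>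
      \<le> (\<Sum>p\<in>UNIV. B p * T) * norm h" .
  moreover have "\<bar>blinfun_apply O' h\<bar> \<le> norm O' * norm h"
    by (metis norm_blinfun real_norm_def)
  ultimately show "\<bar>blinfun_apply O' h +
      \<mu> * (\<Sum>p\<in>UNIV. \<Sum>(a, b)\<in>intervals (S p). (b - a) * dP p ((a + b) / 2) h)\<bar>
      \<le> (norm O' + \<mu> * (\<Sum>p\<in>UNIV. B p * T)) * norm h"
    using \<open>0 \<le> \<mu>\<close> by (simp add: abs_mult distrib_right order_trans[OF abs_triangle_ineq]
        add_mono mult_left_mono mult.assoc)
qed

lemma bounded_grad_energy:
  fixes bp :: "'q::finite \<Rightarrow> real \<Rightarrow> real^'n \<Rightarrow> (real^3) set"
    and ob :: "'k::finite \<Rightarrow> (real^3) set"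
  assumes Dist_C2: "\<forall>p. C2_on UNIV (\<lambda>(t, x). Dist bp ob p t x)"
    and "C2_on {0<..} P" "C2_on UNIV Obj" "0 \<le> T" "0 \<le> \<mu>"
    and safe: "\<And>p t. t \<in> {0..T} \<Longrightarrow> d0 < Dist bp ob p t \<theta>"
  obtains C where "\<And>S. \<forall>p. is_partition T (S p) \<Longrightarrow> norm (grad (energy Obj P \<mu> d0 bp ob S) \<theta>) \<le> C"
proof -
  have "\<exists>D. (\<forall>z. ((\<lambda>(t, x). Dist bp ob p t x) has_derivative blinfun_apply (D z)) (at z))
      \<and> continuous_on UNIV D" for p
    using C2_on_imp_continuous_derivative[OF Dist_C2[rule_format, of p]] by (metis UNIV_I)
  then obtain D where Dist_deriv: "\<And>p z. ((\<lambda>(t, x). Dist bp ob p t x) has_derivative blinfun_apply (D p z)) (at z)"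
    and D_cont: "\<And>p. continuous_on UNIV (D p)"
    by metis
  obtain P' where P_deriv: "\<And>y. 0 < y \<Longrightarrow> (P has_derivative blinfun_apply (P' y)) (at y)"
    and P'_cont: "continuous_on {0<..} P'"
    using C2_on_imp_continuous_derivative[OF \<open>C2_on {0<..} P\<close>] by (metis greaterThan_iff)
  obtain O' where Obj_deriv: "(Obj has_derivative blinfun_apply O') (at \<theta>)"
    using C2_on_imp_continuous_derivative[OF \<open>C2_on UNIV Obj\<close>] by blast
  have "\<exists>b. \<forall>t\<in>{0..T}. norm (P' (Dist bp ob p t \<theta> - d0)) * norm (D p (t, \<theta>)) \<le> b" for p
  proof -
    have "continuous_on {0..T} (\<lambda>t. (\<lambda>(t, x). Dist bp ob p t x) (t, \<theta>))"
      by (intro continuous_on_compose2[OF C2_on_imp_continuous_on[OF Dist_C2[rule_format, of p]]]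
          continuous_intros) auto
    then have Dist_cont: "continuous_on {0..T} (\<lambda>t. Dist bp ob p t \<theta>)"
      by simp
    have "continuous_on {0..T} (\<lambda>t. norm (P' (Dist bp ob p t \<theta> - d0)) * norm (D p (t, \<theta>)))"
      using safe[of _ p]
      by (intro continuous_intros continuous_on_compose2[OF P'_cont] continuous_on_compose2[OF D_cont]
          Dist_cont) auto
    then have "bdd_above ((\<lambda>t. norm (P' (Dist bp ob p t \<theta> - d0)) * norm (D p (t, \<theta>))) ` {0..T})"
      by (intro bounded_imp_bdd_above compact_imp_bounded compact_continuous_image compact_Icc)
    then show ?thesis
      by (auto simp: bdd_above_def)
  qed
  then obtain B where
    "\<And>p t. t \<in> {0..T} \<Longrightarrow> norm (P' (Dist bp ob p t \<theta> - d0)) * norm (D p (t, \<theta>)) \<le> B p"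
    by metis
  then show ?thesis
    using that norm_grad_energy_le[OF Dist_deriv P_deriv Obj_deriv] assms(4,5) safe by blast
qed

lemma bounded_direction:
  fixes bp :: "'q::finite \<Rightarrow> real \<Rightarrow> real^'n \<Rightarrow> (real^3) set"
    and ob :: "'k::finite \<Rightarrow> (real^3) set"
  assumes "\<forall>p. C2_on UNIV (\<lambda>(t, x). Dist bp ob p t x)"
    and "C2_on {0<..} P" "C2_on UNIV Obj" "0 \<le> T" "0 \<le> \<mu>"
    and "\<And>p t. t \<in> {0..T} \<Longrightarrow> d0 < Dist bp ob p t \<theta>"
    and "0 < \<beta>" "\<And>H v. \<beta> * (v \<bullet> v) \<le> v \<bullet> (M H *v v)"
  obtains B where "\<And>S. \<forall>p. is_partition T (S p) \<Longrightarrow>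
    norm (direction newton M (energy Obj P \<mu> d0 bp ob S) \<theta>) \<le> B"
proof -
  obtain C where grad_bound: "\<And>S. \<forall>p. is_partition T (S p) \<Longrightarrow>
      norm (grad (energy Obj P \<mu> d0 bp ob S) \<theta>) \<le> C"
    using bounded_grad_energy[OF assms(1-6)] by metis
  have "norm (direction newton M (energy Obj P \<mu> d0 bp ob S) \<theta>) \<le> max 1 (1 / \<beta>) * C"
    if "\<forall>p. is_partition T (S p)" for S
  proof -
    have "norm (direction newton M (energy Obj P \<mu> d0 bp ob S) \<theta>)
        \<le> max 1 (1 / \<beta>) * norm (grad (energy Obj P \<mu> d0 bp ob S) \<theta>)"
      by (rule norm_direction_le[OF assms(7,8)])
    also have "\<dots> \<le> max 1 (1 / \<beta>) * C"
      by (rule mult_left_mono[OF grad_bound[OF that]]) simp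
    finally show ?thesis .
  qed
  then show ?thesis
    using that by blast
qed

section \<open>Safety margins\<close>

lemma passes_check_imp_safe:
  assumes "\<forall>q. is_partition T (S q)" "0 < T" "0 < L2"
    and Lip: "\<And>t1 t2. \<bar>Dist bp ob p t1 \<theta> - Dist bp ob p t2 \<theta>\<bar> \<le> L1 * \<bar>t1 - t2\<bar>"
    and passes: "\<not> check_fails bp ob d0 L1 L2 \<eta> S \<theta>"
    and "t \<in> {0..T}"
  shows "d0 < Dist bp ob p t \<theta>"
proof (rule ccontr)
  assume unsafe: "\<not> d0 < Dist bp ob p t \<theta>"
  obtain a b where ab: "(a, b) \<in> intervals (S p)" "a \<le> t" "t \<le> b"
    using partition_intervals_cover[OF assms(1)[rule_format] assms(2,6)] by blast
  have "0 \<le> L1"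
    using order_trans[OF abs_ge_zero Lip[of 1 0]] by simp
  have "Dist bp ob p ((a + b) / 2) \<theta> \<le> Dist bp ob p t \<theta> + L1 * \<bar>(a + b) / 2 - t\<bar>"
    using abs_le_D1[OF Lip[of "(a + b) / 2" t]] by linarith
  also have "\<dots> \<le> Dist bp ob p t \<theta> + L1 * ((b - a) / 2)"
  proof -
    have "\<bar>(a + b) / 2 - t\<bar> \<le> (b - a) / 2"
      using ab(2,3) by (simp add: abs_le_iff field_simps)
    from mult_left_mono[OF this \<open>0 \<le> L1\<close>] show ?thesis
      by simp
  qed
  also have "\<dots> < d0 + psi L1 L2 \<eta> (b - a)"
  proof -
    have "0 < L2 * (b - a) powr \<eta>"
      using ab(1) \<open>0 < L2\<close> by (simp add: intervals_def)
    then show ?thesis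
      using unsafe unfolding psi_def by simp
  qed
  finally have "viol bp ob d0 L1 L2 \<eta> S \<theta> p a b"
    unfolding viol_def using ab(1) by simp
  then show False
    using passes unfolding check_fails_def by blast
qed

lemma psi_tendsto_zero:
  assumes "0 < \<eta>"
  shows "(psi L1 L2 \<eta> \<longlongrightarrow> 0) (at_right 0)"
proof -
  have "((\<lambda>l::real. l powr \<eta>) \<longlongrightarrow> 0) (at_right 0)"
    using assms by (intro tendsto_zero_powrI tendsto_ident_at) (auto simp: eventually_at_right_field intro: exI[of _ 1])
  then have "((\<lambda>l. L1 * l / 2 + L2 * l powr \<eta>) \<longlongrightarrow> L1 * 0 / 2 + L2 * 0) (at_right 0)"
    by (intro tendsto_intros tendsto_ident_at) auto
  then show ?thesis
    unfolding psi_def[abs_def] by simp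
qed

lemma eventually_uniform_margin:
  fixes F :: "'a::topological_space \<times> 'b::topological_space \<Rightarrow> real"
  assumes "compact K" "continuous_on UNIV F" "\<And>t. t \<in> K \<Longrightarrow> d0 < F (t, y)"
  shows "\<exists>m>0. \<forall>\<^sub>F x in nhds y. \<forall>t\<in>K. d0 + m < F (t, x)"
proof (cases "K = {}")
  case False
  have "continuous_on K (\<lambda>t. F (t, y))"
    by (intro continuous_on_compose2[OF assms(2)] continuous_intros) auto
  then obtain t0 where "t0 \<in> K" and t0_min: "\<And>t. t \<in> K \<Longrightarrow> F (t0, y) \<le> F (t, y)"
    using continuous_attains_inf[OF assms(1) False] by blast
  define m where "m = (F (t0, y) - d0) / 2"
  have "0 < m"
    using assms(3)[OF \<open>t0 \<in> K\<close>] unfolding m_def by simp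
  define W where "W = {z. d0 + m < F (snd z, fst z)}"
  have "continuous_on UNIV (\<lambda>z. F (snd z, fst z))"
    by (intro continuous_on_compose2[OF assms(2)] continuous_intros) auto
  then have "open W"
    unfolding W_def by (intro open_Collect_less continuous_on_const)
  moreover have "d0 + m < F (t, y)" if "t \<in> K" for t
    using t0_min[OF that] assms(3)[OF \<open>t0 \<in> K\<close>] unfolding m_def by (simp add: field_simps)
  then have "{y} \<times> K \<subseteq> W"
    unfolding W_def by auto
  ultimately obtain Y where "y \<in> Y" "open Y" "Y \<times> K \<subseteq> W"
    using Elementary_Topology.tube_lemma[OF assms(1)] by metis
  then have "\<forall>x\<in>Y. \<forall>t\<in>K. d0 + m < F (t, x)"
    unfolding W_def by (auto simp: subset_iff)
  then have "\<forall>\<^sub>F x in nhds y. \<forall>t\<in>K. d0 + m < F (t, x)"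
    using \<open>y \<in> Y\<close> \<open>open Y\<close> eventually_nhds by blast
  then show ?thesis
    using \<open>0 < m\<close> by blast
qed (simp add: exI[of _ 1])

lemma eventually_uniform_margin_finite:
  fixes F :: "'p::finite \<Rightarrow> 'a::topological_space \<times> 'b::topological_space \<Rightarrow> real"
  assumes "compact K" "\<And>p. continuous_on UNIV (F p)" "\<And>p t. t \<in> K \<Longrightarrow> d0 < F p (t, y)"
  shows "\<exists>m>0. \<forall>\<^sub>F x in nhds y. \<forall>p. \<forall>t\<in>K. d0 + m < F p (t, x)"
proof -
  have "\<forall>p. \<exists>m. 0 < m \<and> (\<forall>\<^sub>F x in nhds y. \<forall>t\<in>K. d0 + m < F p (t, x))"
    using eventually_uniform_margin[OF assms(1,2,3)] by blast
  then obtain m where m_pos: "\<And>p. 0 < m p"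
    and margin: "\<And>p. \<forall>\<^sub>F x in nhds y. \<forall>t\<in>K. d0 + m p < F p (t, x)"
    unfolding choice_iff by blast
  define m0 where "m0 = Min (range m)"
  have "0 < m0" "\<And>p. m0 \<le> m p"
    using m_pos unfolding m0_def by simp_all
  have "\<forall>\<^sub>F x in nhds y. \<forall>t\<in>K. d0 + m0 < F p (t, x)" for p
    using margin[of p] by (rule eventually_mono) (use \<open>m0 \<le> m p\<close> in fastforce)
  then have "\<forall>\<^sub>F x in nhds y. \<forall>p. \<forall>t\<in>K. d0 + m0 < F p (t, x)"
    by (rule eventually_all_finite)
  then show ?thesis
    using \<open>0 < m0\<close> by blast
qed

lemma eventually_Dist_margin:
  fixes bp :: "'q::finite \<Rightarrow> real \<Rightarrow> real^'n \<Rightarrow> (real^3) set"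
    and ob :: "'k::finite \<Rightarrow> (real^3) set"
  assumes "\<forall>p. C2_on UNIV (\<lambda>(t, x). Dist bp ob p t x)"
    and "\<And>p t. t \<in> {0..T} \<Longrightarrow> d0 < Dist bp ob p t \<theta>"
  obtains m where "0 < m" "\<forall>\<^sub>F x in nhds \<theta>. \<forall>p. \<forall>t\<in>{0..T}. d0 + m < Dist bp ob p t x"
proof -
  have "continuous_on UNIV (\<lambda>(t, x). Dist bp ob p t x)" for p
    using C2_on_imp_continuous_on assms(1) by blast
  then have "\<exists>m>0. \<forall>\<^sub>F x in nhds \<theta>. \<forall>p. \<forall>t\<in>{0..T}. d0 + m < Dist bp ob p t x"
    using eventually_uniform_margin_finite[OF compact_Icc, where F = "\<lambda>p (t, x). Dist bp ob p t x"
        and y = \<theta>] assms(2)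
    by simp
  then show ?thesis
    using that by blast
qed

section \<open>Runs of the line search\<close>

lemma bounded_separated_imp_finite:
  fixes f :: "'a \<Rightarrow> 'b::heine_borel"
  assumes "bounded (f ` A)" "0 < e"
    and separated: "\<And>x y. x \<in> A \<Longrightarrow> y \<in> A \<Longrightarrow> x \<noteq> y \<Longrightarrow> e \<le> dist (f x) (f y)"
  shows "finite A"
proof (rule ccontr)
  assume "infinite A"
  moreover have "inj_on f A"
    using separated \<open>0 < e\<close> by (fastforce intro: inj_onI)
  ultimately have "infinite (f ` A)"
    using finite_imageD by blast
  then obtain z where "z islimpt f ` A"
    using bounded_infinite_imp_islimpt[OF order_refl assms(1)] by blast
  then have "infinite (f ` A \<inter> ball z (e / 2))"
    using \<open>0 < e\<close> unfolding islimpt_eq_infinite_ball by simp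
  then obtain u v where "u \<in> f ` A \<inter> ball z (e / 2)" "v \<in> f ` A \<inter> ball z (e / 2)" "u \<noteq> v"
    by (metis finite.emptyI finite_insert insert_iff subsetI finite_subset)
  moreover have "dist u v < e"
    using calculation(1,2) dist_triangle_half_l[of u z e v] by (auto simp: dist_commute)
  ultimately show False
    using separated by (fastforce simp: not_less[symmetric])
qed

lemma filterlim_card_Int_lessThan:
  fixes A :: "nat set"
  assumes "infinite A"
  shows "filterlim (\<lambda>n. card (A \<inter> {..<n})) at_top sequentially"
  unfolding filterlim_at_top
proof
  fix Z
  obtain B where "finite B" "card B = Z" "B \<subseteq> A"
    using infinite_arbitrarily_large[OF assms] by blast
  moreover obtain N where "B \<subseteq> {..<N}"
    using finite_nat_bounded[OF \<open>finite B\<close>] by blast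
  ultimately have "Z \<le> card (A \<inter> {..<n})" if "N \<le> n" for n
  proof -
    have "B \<subseteq> A \<inter> {..<n}"
      using \<open>B \<subseteq> A\<close> \<open>B \<subseteq> {..<N}\<close> that by auto
    then have "card B \<le> card (A \<inter> {..<n})"
      by (intro card_mono) auto
    then show ?thesis
      using \<open>card B = Z\<close> by simp
  qed
  then show "\<forall>\<^sub>F n in sequentially. Z \<le> card (A \<inter> {..<n})"
    by (rule eventually_sequentiallyI)
qed

(* The check V, the direction map dirf and the energy Ef are kept abstract: all that is used
   about V is that it only flags intervals of the current partition. *)
locale line_search_run =
  fixes V :: "('p::finite \<Rightarrow> real set) \<Rightarrow> real^'n \<Rightarrow> 'p \<Rightarrow> real \<Rightarrow> real \<Rightarrow> bool"
    and dirf :: "('p \<Rightarrow> real set) \<Rightarrow> real^'n"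
    and Ef :: "('p \<Rightarrow> real set) \<Rightarrow> real^'n \<Rightarrow> real"
    and \<gamma> c T :: real
    and \<theta> :: "real^'n"
    and run :: "nat \<Rightarrow> ('p, 'n) ls_state"
  assumes V_interval: "\<And>S x p a b. V S x p a b \<Longrightarrow> (a, b) \<in> intervals (S p)"
    and gamma: "0 < \<gamma>" "\<gamma> < 1"
    and run_steps: "\<And>n. ls_subdiv_step V dirf \<gamma> \<theta> (run n) (run (Suc n)) \<or>
                        ls_shrink_step V Ef \<gamma> c \<theta> (run n) (run (Suc n))"
    and step_len_0: "0 < fst (run 0)"
    and breaks_0: "\<forall>p. is_partition T (fst (snd (snd (run 0))) p)"
begin

definition step_len :: "nat \<Rightarrow> real" where "step_len n = fst (run n)"
definition tol :: "nat \<Rightarrow> real" where "tol n = fst (snd (run n))"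
definition breaks :: "nat \<Rightarrow> 'p \<Rightarrow> real set" where "breaks n = fst (snd (snd (run n)))"
definition dir :: "nat \<Rightarrow> real^'n" where "dir n = snd (snd (snd (run n)))"
definition trial :: "nat \<Rightarrow> real^'n" where "trial n = \<theta> + step_len n *\<^sub>R dir n"
definition subdiv_steps :: "nat set" where
  "subdiv_steps = {n. ls_subdiv_step V dirf \<gamma> \<theta> (run n) (run (Suc n))}"

lemma run_eq: "run n = (step_len n, tol n, breaks n, dir n)"
  by (simp add: step_len_def tol_def breaks_def dir_def)

lemma subdiv_step:
  assumes "n \<in> subdiv_steps"
  shows "step_len n \<le> tol n" "step_len (Suc n) = step_len n" "tol (Suc n) = \<gamma> * tol n"
    and "dir (Suc n) = dirf (breaks (Suc n))"
    and "\<exists>p a b. V (breaks n) (trial n) p a b \<and> breaks (Suc n) = subdivide (breaks n) p a b"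
proof -
  have "ls_subdiv_step V dirf \<gamma> \<theta> (run n) (run (Suc n))"
    using assms by (simp add: subdiv_steps_def)
  then show "step_len n \<le> tol n" "step_len (Suc n) = step_len n" "tol (Suc n) = \<gamma> * tol n"
    and "dir (Suc n) = dirf (breaks (Suc n))"
    and "\<exists>p a b. V (breaks n) (trial n) p a b \<and> breaks (Suc n) = subdivide (breaks n) p a b"
    unfolding ls_subdiv_step_def run_eq[of n] run_eq[of "Suc n"] trial_def by auto
qed

lemma shrink_step:
  assumes "n \<notin> subdiv_steps"
  shows "step_len (Suc n) = \<gamma> * step_len n" "tol (Suc n) = tol n"
    and "breaks (Suc n) = breaks n" "dir (Suc n) = dir n"
proof -
  have "ls_shrink_step V Ef \<gamma> c \<theta> (run n) (run (Suc n))"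
    using assms run_steps[of n] by (simp add: subdiv_steps_def)
  then show "step_len (Suc n) = \<gamma> * step_len n" "tol (Suc n) = tol n"
    and "breaks (Suc n) = breaks n" "dir (Suc n) = dir n"
    unfolding ls_shrink_step_def run_eq[of n] run_eq[of "Suc n"] by auto
qed

lemma step_len_pos: "0 < step_len n"
proof (induction n)
  case (Suc n)
  then show ?case
    using gamma by (cases "n \<in> subdiv_steps") (simp_all add: subdiv_step shrink_step)
qed (use step_len_0 in \<open>simp add: step_len_def\<close>)

lemma breaks_partition: "\<forall>p. is_partition T (breaks n p)"
proof (induction n)
  case (Suc n)
  show ?case
  proof (cases "n \<in> subdiv_steps")
    case True
    then obtain p a b where flagged: "V (breaks n) (trial n) p a b"
      and "breaks (Suc n) = subdivide (breaks n) p a b"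
      using subdiv_step(5) by blast
    then show ?thesis
      using is_partition_subdivide[OF Suc.IH V_interval[OF flagged]] by simp
  qed (simp add: shrink_step Suc)
qed (use breaks_0 in \<open>simp add: breaks_def\<close>)

lemma breaks_mono: "m \<le> n \<Longrightarrow> breaks m p \<subseteq> breaks n p"
proof (induction n rule: dec_induct)
  case (step n)
  have "breaks n p \<subseteq> breaks (Suc n) p"
    using subdiv_step(5)[of n] shrink_step(3)[of n] by (cases "n \<in> subdiv_steps") (auto simp: subdivide_def)
  then show ?case
    using step.IH by blast
qed simp

lemma tol_eq: "tol n = \<gamma> ^ card (subdiv_steps \<inter> {..<n}) * tol 0"
proof (induction n)
  case (Suc n)
  have "subdiv_steps \<inter> {..<Suc n} = (if n \<in> subdiv_steps then insert n (subdiv_steps \<inter> {..<n})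
      else subdiv_steps \<inter> {..<n})"
    by (auto simp: lessThan_Suc)
  then show ?case
    using Suc by (cases "n \<in> subdiv_steps") (simp_all add: subdiv_step shrink_step)
qed simp

lemma tol_tendsto_zero:
  assumes "infinite subdiv_steps"
  shows "tol \<longlonglongrightarrow> 0"
proof -
  have "filterlim (\<lambda>n. card (subdiv_steps \<inter> {..<n})) at_top sequentially"
    using assms by (rule filterlim_card_Int_lessThan)
  then have "(\<lambda>n. \<gamma> ^ card (subdiv_steps \<inter> {..<n})) \<longlonglongrightarrow> 0"
    using gamma by (intro filterlim_compose[OF LIMSEQ_power_zero]) auto
  then have "(\<lambda>n. \<gamma> ^ card (subdiv_steps \<inter> {..<n}) * tol 0) \<longlonglongrightarrow> 0"
    by (rule tendsto_mult_left_zero)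
  also have "(\<lambda>n. \<gamma> ^ card (subdiv_steps \<inter> {..<n}) * tol 0) = tol"
    by (rule ext) (rule tol_eq[symmetric])
  finally show ?thesis .
qed

lemma eventually_dir_eq:
  assumes "n0 \<in> subdiv_steps"
  shows "\<forall>\<^sub>F n in sequentially. dir n = dirf (breaks n)"
proof (rule eventually_sequentiallyI)
  show "dir n = dirf (breaks n)" if "Suc n0 \<le> n" for n
    using that
  proof (induction n rule: dec_induct)
    case (step n)
    then show ?case
      by (cases "n \<in> subdiv_steps") (simp_all add: subdiv_step shrink_step)
  qed (rule subdiv_step(4)[OF assms])
qed

lemma eventually_trial_near:
  assumes "infinite subdiv_steps"
    and dir_bound: "\<And>S. \<forall>p. is_partition T (S p) \<Longrightarrow> norm (dirf S) \<le> B"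
    and "eventually P (nhds \<theta>)"
  shows "\<forall>\<^sub>F n in sequentially. n \<in> subdiv_steps \<longrightarrow> P (trial n)"
proof -
  obtain r where "0 < r" and near: "\<And>x. dist x \<theta> < r \<Longrightarrow> P x"
    using assms(3) unfolding eventually_nhds_metric by blast
  obtain n0 where "n0 \<in> subdiv_steps"
    using assms(1) by (metis finite.emptyI ex_in_conv)
  have "(\<lambda>n. tol n * B) \<longlonglongrightarrow> 0"
    using tol_tendsto_zero[OF assms(1)] by (rule tendsto_mult_left_zero)
  then have "\<forall>\<^sub>F n in sequentially. tol n * B < r"
    using \<open>0 < r\<close> by (rule order_tendstoD)
  with eventually_dir_eq[OF \<open>n0 \<in> subdiv_steps\<close>]
  show ?thesis
  proof eventually_elim
    case (elim n)
    show ?case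
    proof
      assume "n \<in> subdiv_steps"
      have "dist (trial n) \<theta> = step_len n * norm (dir n)"
        using step_len_pos[of n] by (simp add: trial_def dist_norm)
      also have "\<dots> \<le> tol n * B"
        using subdiv_step(1)[OF \<open>n \<in> subdiv_steps\<close>] step_len_pos[of n] elim(1)
          dir_bound[OF breaks_partition] by (intro mult_mono) auto
      finally show "P (trial n)"
        using elim(2) near by simp
    qed
  qed
qed


lemma subdivision_choice:
  obtains p a b where "\<And>n. n \<in> subdiv_steps \<Longrightarrow>
    V (breaks n) (trial n) (p n) (a n) (b n) \<and> breaks (Suc n) = subdivide (breaks n) (p n) (a n) (b n)"
proof -
  have "\<forall>n. \<exists>p a b. n \<in> subdiv_steps \<longrightarrow>
      V (breaks n) (trial n) p a b \<and> breaks (Suc n) = subdivide (breaks n) p a b"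
    using subdiv_step(5) by blast
  then show ?thesis
    using that unfolding choice_iff by blast
qed

(* The midpoint of a subdivided interval stays a breakpoint, and a later flagged interval of
   the same triple contains no breakpoint in its interior; so the midpoints of subdivided
   intervals of length >= delta are delta/2-separated in [0, T]. *)
lemma finite_long_subdivisions:
  assumes "0 < \<delta>"
    and flagged: "\<And>n. n \<in> subdiv_steps \<Longrightarrow>
      V (breaks n) (trial n) (p n) (a n) (b n) \<and> breaks (Suc n) = subdivide (breaks n) (p n) (a n) (b n)"
  shows "finite {n \<in> subdiv_steps. \<delta> \<le> b n - a n}" (is "finite ?L")
proof -
  define mid where "mid n = (a n + b n) / 2" for n
  have mid_range: "mid n \<in> {0..T}" if "n \<in> subdiv_steps" for n
  proof -
    have "breaks n (p n) \<subseteq> {0..T}"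
      using breaks_partition[of n] by (simp add: is_partition_def)
    with V_interval show ?thesis
      using flagged[OF that] unfolding mid_def by (blast intro: midpoint_mem_intervals)
  qed
  have sep: "\<delta> / 2 \<le> dist (mid n) (mid k)" if "n \<in> subdiv_steps" "k \<in> ?L" "n < k" "p n = p k" for n k
  proof -
    have "mid n \<in> breaks (Suc n) (p n)"
      using flagged[OF that(1)] by (simp add: subdivide_def mid_def)
    then have "mid n \<in> breaks k (p k)"
      using breaks_mono[of "Suc n" k] that(3,4) by auto
    moreover have "(a k, b k) \<in> intervals (breaks k (p k))"
      using V_interval flagged that(2) by blast
    ultimately have "mid n \<le> a k \<or> b k \<le> mid n"
      unfolding intervals_def by force
    moreover have "\<delta> \<le> b k - a k"
      using that(2) by simp
    ultimately show ?thesis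
      unfolding mid_def dist_real_def by (auto simp: abs_if field_simps)
  qed
  have separated: "\<delta> / 2 \<le> dist (mid n) (mid k)"
    if "n \<in> ?L \<inter> {n. p n = q}" "k \<in> ?L \<inter> {n. p n = q}" "n \<noteq> k" for n k q
  proof (cases "n < k")
    case True
    then show ?thesis
      using sep[of n k] that by simp
  next
    case False
    then have "k < n"
      using that(3) by simp
    then show ?thesis
      using sep[of k n] that by (simp add: dist_commute)
  qed
  have bounded: "bounded (mid ` (?L \<inter> {n. p n = q}))" for q
    using mid_range by (intro bounded_subset[OF bounded_closed_interval[of 0 T]]) auto
  have "finite (?L \<inter> {n. p n = q})" for q
    by (rule bounded_separated_imp_finite[OF bounded, of "\<delta> / 2"]) (use assms(1) separated in auto)
  then have "finite (\<Union>q. ?L \<inter> {n. p n = q})"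
    by (intro finite_UN_I) auto
  then show ?thesis
    by (rule finite_subset[rotated]) blast
qed

lemma short_subdivision_near:
  assumes "infinite subdiv_steps"
    and "\<And>S. \<forall>p. is_partition T (S p) \<Longrightarrow> norm (dirf S) \<le> B"
    and "eventually P (nhds \<theta>)" "0 < \<delta>"
  obtains n p a b where "V (breaks n) (trial n) p a b" "P (trial n)"
    "(a + b) / 2 \<in> {0..T}" "0 < b - a" "b - a < \<delta>"
proof -
  obtain p a b where flagged: "\<And>n. n \<in> subdiv_steps \<Longrightarrow>
      V (breaks n) (trial n) (p n) (a n) (b n) \<and> breaks (Suc n) = subdivide (breaks n) (p n) (a n) (b n)"
    using subdivision_choice by blast
  obtain N where near: "\<And>n. N \<le> n \<Longrightarrow> n \<in> subdiv_steps \<Longrightarrow> P (trial n)"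
    using eventually_trial_near[OF assms(1-3)] unfolding eventually_sequentially by blast
  have "infinite (subdiv_steps - {n \<in> subdiv_steps. \<delta> \<le> b n - a n})"
    using assms(1) finite_long_subdivisions[OF assms(4) flagged] by (rule Diff_infinite_finite[rotated])
  then obtain n where "N \<le> n" "n \<in> subdiv_steps" "b n - a n < \<delta>"
    unfolding infinite_nat_iff_unbounded_le by fastforce
  moreover have "(a n, b n) \<in> intervals (breaks n (p n))"
    using V_interval flagged[OF \<open>n \<in> subdiv_steps\<close>] by blast
  moreover have "breaks n (p n) \<subseteq> {0..T}"
    using breaks_partition[of n] by (simp add: is_partition_def)
  ultimately show ?thesis
    using that[of n "p n" "a n" "b n"] flagged near midpoint_mem_intervals[of "a n" "b n" "breaks n (p n)" T]
    by (simp add: intervals_def)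
qed

end

theorem lemma6:
  fixes bp :: "'q::finite \<Rightarrow> real \<Rightarrow> real^'n \<Rightarrow> (real^3) set"
    and ob :: "'k::finite \<Rightarrow> (real^3) set"
    and Obj :: "real^'n \<Rightarrow> real"
    and P :: "real \<Rightarrow> real"
    and M :: "real^'n^'n \<Rightarrow> real^'n^'n"
    and \<Theta> :: "(real^'n) set"
    and \<theta> d :: "real^'n"
    and T d0 L1 L2 \<eta> \<mu> \<alpha>0 \<gamma> c \<epsilon>0 \<beta>lo \<beta>hi :: real
    and newton :: bool
    and S0 :: "'q \<times> 'k \<Rightarrow> real set"
    and run :: "nat \<Rightarrow> ('q \<times> 'k, 'n) ls_state"
  defines "V \<equiv> viol bp ob d0 L1 L2 \<eta>"
    and "Ef \<equiv> energy Obj P \<mu> d0 bp ob"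
    and "dirf \<equiv> (\<lambda>S. direction newton M (energy Obj P \<mu> d0 bp ob S) \<theta>)"
  assumes A1: "\<forall>p. C2_on UNIV (\<lambda>(t, x). Dist bp ob p t x)"
    and A2: "bounded \<Theta>" "\<theta> \<in> \<Theta>"
    and A3_smooth: "C2_on {0<..} P"
    and A3_mono: "\<forall>x y. 0 < x \<and> x \<le> y \<longrightarrow> P y \<le> P x"
    and A3_lim0: "filterlim P at_top (at_right 0)"
    and A3_liminf: "(P \<longlongrightarrow> 0) at_top"
    and A3_xP: "filterlim (\<lambda>x. x * P x) at_top (at_right 0)"
    and Lip: "\<forall>p t1 t2 x. \<bar>Dist bp ob p t1 x - Dist bp ob p t2 x\<bar> \<le> L1 * \<bar>t1 - t2\<bar>"
    and Obj_C2: "C2_on UNIV Obj"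
    and T_pos: "0 < T" and d0_nonneg: "0 \<le> d0"
    and L2_pos: "0 < L2" and eta_pos: "0 < \<eta>" and mu_pos: "0 < \<mu>"
    and alpha0_pos: "0 < \<alpha>0" and gamma: "0 < \<gamma>" "\<gamma> < 1" and c: "0 < c" "c < 1"
    and M_bounds: "0 < \<beta>lo" "\<beta>lo \<le> \<beta>hi"
      "\<forall>H. transpose (M H) = M H \<and>
           (\<forall>v. \<beta>lo * (v \<bullet> v) \<le> v \<bullet> (M H *v v) \<and> v \<bullet> (M H *v v) \<le> \<beta>hi * (v \<bullet> v))"
    and S0_part: "\<forall>p. is_partition T (S0 p)"
    and run0: "run 0 = (\<alpha>0, \<epsilon>0, S0, d)"
    and run_steps: "\<forall>n. ls_subdiv_step V dirf \<gamma> \<theta> (run n) (run (Suc n)) \<or>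
                        ls_shrink_step V Ef \<gamma> c \<theta> (run n) (run (Suc n))"
    and inf_subdiv: "infinite {n. ls_subdiv_step V dirf \<gamma> \<theta> (run n) (run (Suc n))}"
  shows "\<forall>S. (\<forall>p. is_partition T (S p)) \<longrightarrow> check_fails bp ob d0 L1 L2 \<eta> S \<theta>"
proof (intro allI impI)
  fix S :: "'q \<times> 'k \<Rightarrow> real set"
  assume partition: "\<forall>p. is_partition T (S p)"
  show "check_fails bp ob d0 L1 L2 \<eta> S \<theta>"
  proof (rule ccontr)
    assume passes: "\<not> check_fails bp ob d0 L1 L2 \<eta> S \<theta>"
    have safe: "d0 < Dist bp ob p t \<theta>" if "t \<in> {0..T}" for p t
      by (rule passes_check_imp_safe[OF partition T_pos L2_pos _ passes that]) (use Lip in blast)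
    have coercive: "\<And>H v. \<beta>lo * (v \<bullet> v) \<le> v \<bullet> (M H *v v)"
      using M_bounds(3) by blast
    obtain B where "\<And>S. \<forall>p. is_partition T (S p) \<Longrightarrow>
        norm (direction newton M (energy Obj P \<mu> d0 bp ob S) \<theta>) \<le> B"
      using bounded_direction[where M = M and newton = newton, OF A1 A3_smooth Obj_C2 less_imp_le[OF T_pos]
            less_imp_le[OF mu_pos] safe M_bounds(1) coercive] by metis
    then have dir_bound: "norm (dirf S) \<le> B" if "\<forall>p. is_partition T (S p)" for S
      using that by (simp add: dirf_def)
    obtain m where "0 < m" and margin: "\<forall>\<^sub>F x in nhds \<theta>. \<forall>p. \<forall>t\<in>{0..T}. d0 + m < Dist bp ob p t x"
      using eventually_Dist_margin[OF A1 safe] by blast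
    obtain \<delta> where "0 < \<delta>" and psi_small: "\<And>l. 0 < l \<Longrightarrow> l < \<delta> \<Longrightarrow> psi L1 L2 \<eta> l < m"
      using order_tendstoD(2)[OF psi_tendsto_zero[OF eta_pos] \<open>0 < m\<close>]
      unfolding eventually_at_right_field by blast
    interpret line_search_run V dirf Ef \<gamma> c T \<theta> run
      by unfold_locales (use gamma run_steps alpha0_pos S0_part in \<open>simp_all add: V_def viol_def run0\<close>)
    obtain n p a b where flagged: "V (breaks n) (trial n) p a b"
      and near: "\<forall>p. \<forall>t\<in>{0..T}. d0 + m < Dist bp ob p t (trial n)"
      and "(a + b) / 2 \<in> {0..T}" "0 < b - a" "b - a < \<delta>"
      by (rule short_subdivision_near[OF inf_subdiv[folded subdiv_steps_def] dir_bound margin \<open>0 < \<delta>\<close>])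
    have "Dist bp ob p ((a + b) / 2) (trial n) \<le> d0 + psi L1 L2 \<eta> (b - a)"
      using flagged by (simp add: V_def viol_def)
    moreover have "d0 + m < Dist bp ob p ((a + b) / 2) (trial n)"
      using near \<open>(a + b) / 2 \<in> {0..T}\<close> by blast
    ultimately show False
      using psi_small[OF \<open>0 < b - a\<close> \<open>b - a < \<delta>\<close>] by linarith
  qed
qed

end
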